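(* Let $\chi\in[0,1]$ and $f_A,f_R,F$ be as in the context. Define $$w_1(\phi,R,r)=\sqrt{R^2(1-\cos\phi)^2+(R+r)^2\sin^2\phi},\quad w_2(\phi,R,r)=\sqrt{R^2\sin^2\phi+(R+r)^2\cos^2\phi},$$ $$w_3(\phi,R,r)=\sqrt{R^2\cos^2\phi+(R+r)^2(1-\sin\phi)^2}.$$ Then necessary conditions for the ellipse state $\delta_{(R,r)}$, $R,r\ge 0$, to be an equilibrium state of the mean-field equation $\partial_t\rho+\nabla\cdot[\rho\,(F(\cdot,T)\ast\rho)]=0$ are $$\int_0^{\pi}(f_A+f_R)\big(w_1(\phi,R,r)\big)\,R\,(1-\cos\phi)\,w_2(\phi,R,r)\,d\phi=0$$ and $$\int_{\pi/2}^{3\pi/2}(\chi f_A+f_R)\big(w_3(\phi,R,r)\big)\,(R+r)\,(1-\sin\phi)\,w_2(\phi,R,r)\,d\phi=0.$$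
   Context: Let $f_R, f_A:[0,\infty)\to\mathbb{R}$ be smooth integrable functions with $f_R\ge 0$ and $f_A\le 0$, such that there is $d_a>0$ with $(f_A+f_R)(\rho)\le 0$ for $\rho>d_a$ and $(f_A+f_R)(\rho)>0$ for $0\le\rho<d_a$. For $\chi\in[0,1]$, $s=(0,1)$, $l=(1,0)$, let $T=\chi\, s\otimes s + l\otimes l$ and $F(d,T) = f_A(|d|)\,T d + f_R(|d|)\,d$ for $d\in\mathbb{R}^2$; assume $F$ is $C^1$ with bounded total derivatives. Assume there is $d_e>d_a$ such that $\chi f_A+f_R$ is strictly decreasing on $[0,d_e]$ for all $\chi\in[0,1]$. A Borel probability measure $\mu$ on $\mathbb{R}^2$ is an equilibrium state if $K(x):=\int_{\mathbb{R}^2}F(x-y,T)\,d\mu(y)$ satisfies $K\in L^1_{loc}(d\mu)$ and $K=0$ on $\mathrm{supp}(\mu)$ $\mu$-a.e. For $R,r\ge0$, the ellipse state $\delta_{(R,r)}$ is the probability measure uniformly distributed on $\{(R\cos\phi,(R+r)\sin\phi):\phi\in[0,2\pi)\}$. *)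

theory Defs
  imports "HOL-Probability.Probability"
begin

definition smooth_on :: "real set \<Rightarrow> (real \<Rightarrow> real) \<Rightarrow> bool" where
  "smooth_on S f \<longleftrightarrow> (\<exists>D. D 0 = f \<and>
      (\<forall>k. \<forall>x\<in>S. (D k has_real_derivative D (Suc k) x) (at x within S)))"

text \<open>Points of R^2 are pairs (first coordinate, second coordinate); l = (1,0), s = (0,1).
  T = chi s\<otimes>s + l\<otimes>l acts by T (d1,d2) = (d1, chi*d2).\<close>
definition Tmat :: "real \<Rightarrow> real \<times> real \<Rightarrow> real \<times> real" where
  "Tmat chi d = (fst d, chi * snd d)"

definition Fforce :: "(real \<Rightarrow> real) \<Rightarrow> (real \<Rightarrow> real) \<Rightarrow> real \<Rightarrow> real \<times> real \<Rightarrow> real \<times> real" where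
  "Fforce fA fR chi d = fA (norm d) *\<^sub>R Tmat chi d + fR (norm d) *\<^sub>R d"

definition Kfield :: "(real \<Rightarrow> real) \<Rightarrow> (real \<Rightarrow> real) \<Rightarrow> real \<Rightarrow> (real \<times> real) measure
     \<Rightarrow> real \<times> real \<Rightarrow> real \<times> real" where
  "Kfield fA fR chi \<mu> x = (\<integral>y. Fforce fA fR chi (x - y) \<partial>\<mu>)"

definition msupport :: "(real \<times> real) measure \<Rightarrow> (real \<times> real) set" where
  "msupport \<mu> = {x. \<forall>e>0. emeasure \<mu> (ball x e) > 0}"

definition equilibrium_state :: "(real \<Rightarrow> real) \<Rightarrow> (real \<Rightarrow> real) \<Rightarrow> real \<Rightarrow> (real \<times> real) measure \<Rightarrow> bool" where
  "equilibrium_state fA fR chi \<mu> \<longleftrightarrow>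
     prob_space \<mu> \<and> sets \<mu> = sets borel \<and>
     (\<forall>C. compact C \<longrightarrow> set_integrable \<mu> C (Kfield fA fR chi \<mu>)) \<and>
     (AE x in \<mu>. x \<in> msupport \<mu> \<longrightarrow> Kfield fA fR chi \<mu> x = 0)"

text \<open>Ellipse parametrisation and its speed (arc-length element).\<close>
definition ell_curve :: "real \<Rightarrow> real \<Rightarrow> real \<Rightarrow> real \<times> real" where
  "ell_curve R r \<phi> = (R * cos \<phi>, (R + r) * sin \<phi>)"

definition w1 :: "real \<Rightarrow> real \<Rightarrow> real \<Rightarrow> real" where
  "w1 \<phi> R r = sqrt (R\<^sup>2 * (1 - cos \<phi>)\<^sup>2 + (R + r)\<^sup>2 * (sin \<phi>)\<^sup>2)"
definition w2 :: "real \<Rightarrow> real \<Rightarrow> real \<Rightarrow> real" where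
  "w2 \<phi> R r = sqrt (R\<^sup>2 * (sin \<phi>)\<^sup>2 + (R + r)\<^sup>2 * (cos \<phi>)\<^sup>2)"
definition w3 :: "real \<Rightarrow> real \<Rightarrow> real \<Rightarrow> real" where
  "w3 \<phi> R r = sqrt (R\<^sup>2 * (cos \<phi>)\<^sup>2 + (R + r)\<^sup>2 * (1 - sin \<phi>)\<^sup>2)"

text \<open>The ellipse state: the uniform (arc-length) probability distribution on the ellipse;
  for R = r = 0 the ellipse degenerates to the origin and the state is the Dirac mass there.\<close>
definition ellipse_state :: "real \<Rightarrow> real \<Rightarrow> (real \<times> real) measure" where
  "ellipse_state R r =
     (let L = integral {0..2*pi} (\<lambda>\<phi>. w2 \<phi> R r) in
      if L = 0 then return borel (0, 0)
      else distr (density (restrict_space lborel {0..<2*pi}) (\<lambda>\<phi>. ennreal (w2 \<phi> R r / L)))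
                 borel (ell_curve R r))"

end

theory Submission
  imports Defs
begin

text \<open>The force field K of the ellipse state is an integral over the arc-length parameter of
  a jointly continuous integrand, hence continuous. A continuous function that vanishes almost
  everywhere on the support of a Borel measure on the plane vanishes on the whole support, because
  the complement of the support is a null set. The vertex (R, 0) and the co-vertex (0, R + r)
  lie in the support, so K vanishes there; the first component of K at the vertex and the second
  component at the co-vertex are the integrals over [0, 2\<pi>] of the two integrands, and the
  symmetries \<phi> \<mapsto> 2\<pi> - \<phi> and \<phi> \<mapsto> \<pi> - \<phi> fold them onto the stated half intervals.\<close>

lemma smooth_on_imp_continuous_on:
  assumes "smooth_on S f" shows "continuous_on S f"
proof -
  from assms obtain D where "D 0 = f"
    and D: "\<And>k x. x \<in> S \<Longrightarrow> (D k has_real_derivative D (Suc k) x) (at x within S)"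
    unfolding smooth_on_def by blast
  moreover have "continuous_on S (D 0)" by (rule DERIV_continuous_on[OF D])
  ultimately show ?thesis by simp
qed

lemma continuous_on_compose_nonneg:
  assumes "continuous_on {0..} f" "continuous_on UNIV h" "\<And>x. 0 \<le> h x"
  shows "continuous_on UNIV (\<lambda>x. f (h x))"
  by (rule continuous_on_compose2[OF assms(1,2)]) (auto simp: assms(3))

lemma continuous_on_Fforce:
  assumes "continuous_on {0..} fA" "continuous_on {0..} fR"
  shows "continuous_on UNIV (Fforce fA fR chi)"
proof -
  have "continuous_on UNIV (\<lambda>d::real\<times>real. f (norm d))" if "continuous_on {0..} f" for f
    by (rule continuous_on_compose_nonneg[OF that]) (auto intro: continuous_intros)
  then show ?thesis
    unfolding Fforce_def Tmat_def using assms by (intro continuous_intros) auto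
qed

lemma integral_reflection_symmetric:
  fixes G :: "real \<Rightarrow> 'b::banach"
  assumes G: "continuous_on UNIV G" and "0 \<le> p" and sym: "\<And>x. G (2*p - x) = G x"
  shows "integral {0..2*p} G = 2 *\<^sub>R integral {0..p} G"
proof -
  have int: "G integrable_on {a..b}" for a b
    by (rule integrable_continuous_interval) (rule continuous_on_subset[OF G], simp)
  have "integral {p..2*p} G = integral {-(2*p)..-p} (\<lambda>x. G (x + 2*p))"
    using sym[of "_ + 2*p"] Henstock_Kurzweil_Integration.integral_reflect_real[of "2*p" p G] by simp
  also have "\<dots> = integral {0..p} G"
    using integral_shift_real_ivl[of 0 "2*p" p G] by simp
  finally have "integral {p..2*p} G = integral {0..p} G" .
  moreover have "integral {0..p} G + integral {p..2*p} G = integral {0..2*p} G"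
    using \<open>0 \<le> p\<close> by (intro Henstock_Kurzweil_Integration.integral_combine int) auto
  ultimately show ?thesis by (simp add: scaleR_2)
qed

lemma integral_periodic_reflection_symmetric:
  fixes G :: "real \<Rightarrow> 'b::banach"
  assumes G: "continuous_on UNIV G" and "0 \<le> p"
    and periodic: "\<And>x. G (x + 2*p) = G x" and sym: "\<And>x. G (p - x) = G x"
  shows "integral {0..2*p} G = 2 *\<^sub>R integral {p/2..3*p/2} G"
proof -
  have int: "G integrable_on {a..b}" for a b
    by (rule integrable_continuous_interval) (rule continuous_on_subset[OF G], simp)
  have "integral {3*p/2..2*p} G = integral {-p/2..0} G"
    using integral_shift_real_ivl[of "3*p/2" "2*p" "2*p" G] by (simp add: periodic)
  moreover have "integral {-p/2..p/2} G = integral {p/2..3*p/2} G"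
  proof -
    have "integral {p/2..3*p/2} G = integral {-(3*p/2)..-(p/2)} (\<lambda>x. G (x + p))"
      using sym[of "_ + p"] Henstock_Kurzweil_Integration.integral_reflect_real[of "3*p/2" "p/2" G]
      by simp
    also have "\<dots> = integral {-p/2..p/2} G"
      using integral_shift_real_ivl[of "-p/2" p "p/2" G] by simp
    finally show ?thesis by simp
  qed
  moreover have "integral {0..2*p} G
      = integral {0..p/2} G + integral {p/2..3*p/2} G + integral {3*p/2..2*p} G"
    using \<open>0 \<le> p\<close> by (simp add: Henstock_Kurzweil_Integration.integral_combine int)
  moreover have "integral {-p/2..p/2} G = integral {-p/2..0} G + integral {0..p/2} G"
    using \<open>0 \<le> p\<close> by (simp add: Henstock_Kurzweil_Integration.integral_combine int)
  ultimately show ?thesis by (simp add: scaleR_2)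
qed

lemma integral_density_restrict_interval:
  fixes h :: "real \<Rightarrow> 'b::euclidean_space"
  assumes h: "continuous_on UNIV h" and g: "continuous_on UNIV g" and g_nonneg: "\<And>x. g x \<ge> 0"
  shows "integral\<^sup>L (density (restrict_space lborel {a..<b}) (\<lambda>x. ennreal (g x))) h
       = integral {a..b} (\<lambda>x. g x *\<^sub>R h x)"
proof -
  have [measurable]: "g \<in> borel_measurable borel" "h \<in> borel_measurable borel"
    using g h by (simp_all add: borel_measurable_continuous_onI)
  have int: "set_integrable lborel {a..b} (\<lambda>x. g x *\<^sub>R h x)"
    unfolding set_integrable_def
    by (rule borel_integrable_compact)
       (auto intro!: continuous_intros intro: continuous_on_subset[OF g] continuous_on_subset[OF h])
  have "integral\<^sup>L (density (restrict_space lborel {a..<b}) (\<lambda>x. ennreal (g x))) h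
      = integral\<^sup>L (restrict_space lborel {a..<b}) (\<lambda>x. g x *\<^sub>R h x)"
    by (rule integral_density) (auto simp: g_nonneg measurable_restrict_space1)
  also have "\<dots> = (LINT x:{a..<b}|lborel. g x *\<^sub>R h x)"
    by (simp add: integral_restrict_space set_lebesgue_integral_def)
  also have "\<dots> = (LINT x:{a..b}|lborel. g x *\<^sub>R h x)"
  proof (rule set_integral_cong_set)
    show "set_borel_measurable lborel {a..b} (\<lambda>x. g x *\<^sub>R h x)"
      "set_borel_measurable lborel {a..<b} (\<lambda>x. g x *\<^sub>R h x)"
      unfolding set_borel_measurable_def by measurable
    show "AE x in lborel. (x \<in> {a..b}) = (x \<in> {a..<b})"
      using AE_lborel_singleton[of b] by eventually_elim auto
  qed
  also have "\<dots> = integral {a..b} (\<lambda>x. g x *\<^sub>R h x)"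
    by (rule set_borel_integral_eq_integral(2)[OF int])
  finally show ?thesis .
qed

lemma emeasure_density_restrict_interval_pos:
  fixes g :: "real \<Rightarrow> real"
  assumes g: "continuous_on UNIV g" and "c < d" "{c<..<d} \<subseteq> {a..<b}"
    and g_pos: "\<And>x. c < x \<Longrightarrow> x < d \<Longrightarrow> g x > 0"
  shows "emeasure (density (restrict_space lborel {a..<b}) (\<lambda>x. ennreal (g x))) {c<..<d} > 0"
proof (rule ccontr)
  have [measurable]: "g \<in> borel_measurable borel"
    using g by (simp add: borel_measurable_continuous_onI)
  assume "\<not> ?thesis"
  moreover have "emeasure (density (restrict_space lborel {a..<b}) (\<lambda>x. ennreal (g x))) {c<..<d}
      = (\<integral>\<^sup>+x. ennreal (g x) * indicator {c<..<d} x \<partial>restrict_space lborel {a..<b})"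
    using \<open>{c<..<d} \<subseteq> {a..<b}\<close>
    by (intro emeasure_density) (auto simp: measurable_restrict_space1 sets_restrict_space_iff)
  moreover have "\<dots> = (\<integral>\<^sup>+x. ennreal (g x) * indicator {c<..<d} x * indicator {a..<b} x \<partial>lborel)"
    by (rule nn_integral_restrict_space) simp
  ultimately have "(\<integral>\<^sup>+x. ennreal (g x) * indicator {c<..<d} x * indicator {a..<b} x \<partial>lborel) = 0"
    by (simp add: zero_less_iff_neq_zero)
  then have "AE x in lborel. ennreal (g x) * indicator {c<..<d} x * indicator {a..<b} x = 0"
    by (subst (asm) nn_integral_0_iff_AE) auto
  then have "AE x in lborel. x \<notin> {c<..<d}"
    using \<open>{c<..<d} \<subseteq> {a..<b}\<close> g_pos
    by (fastforce elim!: eventually_mono simp: indicator_def ennreal_eq_0_iff)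
  then have "emeasure lborel {c<..<d} = 0"
    by (subst (asm) AE_iff_measurable[where N="{c<..<d}"]) auto
  then show False using \<open>c < d\<close> by simp
qed

lemma AE_in_msupport:
  assumes "sets \<mu> = sets borel"
  shows "AE x in \<mu>. x \<in> msupport \<mu>"
proof -
  obtain \<B> :: "(real \<times> real) set set" where "countable \<B>" and basis: "topological_basis \<B>"
    using ex_countable_basis by blast
  have "AE x in \<mu>. \<forall>U\<in>{U\<in>\<B>. emeasure \<mu> U = 0}. x \<notin> U"
    using \<open>countable \<B>\<close> assms topological_basis_open[OF basis]
    by (subst AE_ball_countable) (auto intro!: AE_not_in)
  moreover have "x \<in> msupport \<mu>" if "\<forall>U\<in>{U\<in>\<B>. emeasure \<mu> U = 0}. x \<notin> U" for x
    unfolding msupport_def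
  proof (intro CollectI allI impI)
    fix e :: real assume "e > 0"
    then obtain U where "U \<in> \<B>" "x \<in> U" "U \<subseteq> ball x e"
      using topological_basisE[OF basis, of "ball x e" x] by auto
    moreover have "ball x e \<in> sets \<mu>" using assms by simp
    ultimately show "emeasure \<mu> (ball x e) > 0"
      using that emeasure_mono[of U "ball x e" \<mu>] by (auto simp: zero_less_iff_neq_zero)
  qed
  ultimately show ?thesis by (auto elim!: eventually_mono)
qed

lemma continuous_AE_zero_on_msupport:
  fixes K :: "real \<times> real \<Rightarrow> 'b::real_normed_vector"
  assumes "sets \<mu> = sets borel" and K: "continuous_on UNIV K"
    and K0: "AE x in \<mu>. x \<in> msupport \<mu> \<longrightarrow> K x = 0" and x: "x \<in> msupport \<mu>"
  shows "K x = 0"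
proof (rule ccontr)
  assume "K x \<noteq> 0"
  then obtain e where "e > 0" and close: "\<And>y. dist y x < e \<Longrightarrow> dist (K y) (K x) < norm (K x)"
    using K unfolding continuous_on_iff by (meson UNIV_I zero_less_norm_iff)
  have nonzero: "K y \<noteq> 0" if "y \<in> ball x e" for y
    using close[of y] that by (auto simp: dist_commute)
  have "AE y in \<mu>. y \<notin> ball x e"
    using AE_in_msupport[OF assms(1)] K0 by eventually_elim (use nonzero in auto)
  then have "emeasure \<mu> (ball x e) = 0"
    using assms(1) sets_eq_imp_space_eq[OF assms(1)]
    by (subst (asm) AE_iff_measurable[where N="ball x e"]) auto
  then show False using x \<open>e > 0\<close> unfolding msupport_def by force
qed

lemma msupport_distr:
  fixes c :: "real \<Rightarrow> real \<times> real"
  assumes c: "c \<in> measurable \<nu> borel" "isCont c \<psi>" and "0 < \<delta>\<^sub>0"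
    and pos: "\<And>\<delta>. 0 < \<delta> \<Longrightarrow> \<delta> \<le> \<delta>\<^sub>0 \<Longrightarrow> emeasure \<nu> {\<psi><..<\<psi>+\<delta>} > 0"
  shows "c \<psi> \<in> msupport (distr \<nu> borel c)"
  unfolding msupport_def
proof (intro CollectI allI impI)
  fix e :: real assume "e > 0"
  then obtain \<delta> where "\<delta> > 0" and close: "\<And>\<phi>. dist \<phi> \<psi> < \<delta> \<Longrightarrow> dist (c \<phi>) (c \<psi>) < e"
    using c(2) unfolding continuous_at_eps_delta by blast
  let ?I = "{\<psi><..<\<psi> + min \<delta> \<delta>\<^sub>0}"
  have I_pos: "emeasure \<nu> ?I > 0"
    using pos \<open>\<delta> > 0\<close> \<open>0 < \<delta>\<^sub>0\<close> by simp
  then have "?I \<in> sets \<nu>" \<comment> \<open>non-measurable sets have measure 0\<close>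
    using emeasure_notin_sets by fastforce
  moreover have "c \<phi> \<in> ball (c \<psi>) e" if "\<phi> \<in> ?I" for \<phi>
    using close[of \<phi>] that by (auto simp: dist_real_def dist_commute)
  ultimately have "?I \<subseteq> c -` ball (c \<psi>) e \<inter> space \<nu>"
    using sets.sets_into_space by blast
  then have "emeasure \<nu> ?I \<le> emeasure \<nu> (c -` ball (c \<psi>) e \<inter> space \<nu>)"
    by (intro emeasure_mono measurable_sets[OF c(1)]) auto
  also have "\<dots> = emeasure (distr \<nu> borel c) (ball (c \<psi>) e)"
    by (rule emeasure_distr[symmetric, OF c(1)]) simp
  finally show "emeasure (distr \<nu> borel c) (ball (c \<psi>) e) > 0"
    using I_pos by order
qed

definition ellipse_perimeter :: "real \<Rightarrow> real \<Rightarrow> real" where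
  "ellipse_perimeter R r = integral {0..2*pi} (\<lambda>\<phi>. w2 \<phi> R r)"

definition ellipse_parameter_measure :: "real \<Rightarrow> real \<Rightarrow> real measure" where
  "ellipse_parameter_measure R r =
     density (restrict_space lborel {0..<2*pi}) (\<lambda>\<phi>. ennreal (w2 \<phi> R r / ellipse_perimeter R r))"

lemma continuous_on_w2: "continuous_on UNIV (\<lambda>\<phi>. w2 \<phi> R r)"
  unfolding w2_def by (intro continuous_intros)

lemma continuous_on_ell_curve: "continuous_on UNIV (ell_curve R r)"
  unfolding ell_curve_def by (intro continuous_intros)

lemma w2_nonneg: "0 \<le> w2 \<phi> R r"
  unfolding w2_def by simp

lemma w2_pos: "R + r \<noteq> 0 \<Longrightarrow> cos \<phi> \<noteq> 0 \<Longrightarrow> 0 < w2 \<phi> R r"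
  unfolding w2_def by (intro real_sqrt_gt_zero add_nonneg_pos) auto

lemma ellipse_perimeter_pos:
  assumes "R + r \<noteq> 0" shows "0 < ellipse_perimeter R r"
proof -
  have cont: "continuous_on {0..2*pi} (\<lambda>\<phi>. w2 \<phi> R r)"
    using continuous_on_w2 by (rule continuous_on_subset) simp
  have "ellipse_perimeter R r \<ge> 0"
    unfolding ellipse_perimeter_def
    by (intro integral_nonneg integrable_continuous_interval cont w2_nonneg)
  moreover have "ellipse_perimeter R r = 0 \<longleftrightarrow> (\<forall>\<phi>\<in>{0..2*pi}. w2 \<phi> R r = 0)"
    unfolding ellipse_perimeter_def by (rule integral_eq_0_iff[OF cont]) (simp_all add: w2_nonneg)
  ultimately show ?thesis
    using w2_pos[OF assms, of 0] by force
qed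

lemma ellipse_state_eq_distr:
  "R + r \<noteq> 0 \<Longrightarrow> ellipse_state R r = distr (ellipse_parameter_measure R r) borel (ell_curve R r)"
  using ellipse_perimeter_pos[of R r]
  unfolding ellipse_state_def ellipse_parameter_measure_def by (simp add: ellipse_perimeter_def)

lemma ell_curve_measurable: "ell_curve R r \<in> measurable (ellipse_parameter_measure R r) borel"
  unfolding ellipse_parameter_measure_def measurable_density_eq1
  by (rule measurable_restrict_space1) (simp add: borel_measurable_continuous_onI continuous_on_ell_curve)

lemma Kfield_ellipse_state:
  assumes F: "continuous_on UNIV (Fforce fA fR chi)" and "R + r \<noteq> 0"
  shows "Kfield fA fR chi (ellipse_state R r) x = integral {0..2*pi}
           (\<lambda>\<phi>. (w2 \<phi> R r / ellipse_perimeter R r) *\<^sub>R Fforce fA fR chi (x - ell_curve R r \<phi>))"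
proof -
  have cont: "continuous_on UNIV (\<lambda>\<phi>. Fforce fA fR chi (x - ell_curve R r \<phi>))"
    by (intro continuous_on_compose2[OF F] continuous_intros continuous_on_ell_curve) auto
  have "Kfield fA fR chi (ellipse_state R r) x
      = integral\<^sup>L (ellipse_parameter_measure R r) (\<lambda>\<phi>. Fforce fA fR chi (x - ell_curve R r \<phi>))"
    unfolding Kfield_def ellipse_state_eq_distr[OF \<open>R + r \<noteq> 0\<close>]
    by (intro integral_distr ell_curve_measurable borel_measurable_continuous_onI
        continuous_on_compose2[OF F] continuous_intros) auto
  also have "\<dots> = integral {0..2*pi}
           (\<lambda>\<phi>. (w2 \<phi> R r / ellipse_perimeter R r) *\<^sub>R Fforce fA fR chi (x - ell_curve R r \<phi>))"
    unfolding ellipse_parameter_measure_def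
    using ellipse_perimeter_pos[OF \<open>R + r \<noteq> 0\<close>]
    by (intro integral_density_restrict_interval cont continuous_intros continuous_on_w2)
       (auto simp: w2_nonneg)
  finally show ?thesis .
qed

lemma continuous_on_Kfield_ellipse_state:
  assumes F: "continuous_on UNIV (Fforce fA fR chi)" and "R + r \<noteq> 0"
  shows "continuous_on UNIV (Kfield fA fR chi (ellipse_state R r))"
proof -
  have "ellipse_perimeter R r \<noteq> 0"
    using ellipse_perimeter_pos[OF \<open>R + r \<noteq> 0\<close>] by simp
  then have "continuous_on (UNIV \<times> cbox 0 (2*pi))
     (\<lambda>(x, \<phi>). (w2 \<phi> R r / ellipse_perimeter R r) *\<^sub>R Fforce fA fR chi (x - ell_curve R r \<phi>))"
    unfolding case_prod_beta
    by (intro continuous_intros continuous_on_compose2[OF continuous_on_w2]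
        continuous_on_compose2[OF F] continuous_on_compose2[OF continuous_on_ell_curve]) auto
  from integral_continuous_on_param[OF this]
  show ?thesis
    by (simp add: Kfield_ellipse_state[OF assms, abs_def])
qed

lemma ell_curve_in_msupport:
  assumes "R + r \<noteq> 0" "0 < \<delta>" "0 \<le> \<psi>" "\<psi> + \<delta> \<le> 2*pi"
    "\<And>\<phi>. \<psi> < \<phi> \<Longrightarrow> \<phi> < \<psi> + \<delta> \<Longrightarrow> cos \<phi> \<noteq> 0"
  shows "ell_curve R r \<psi> \<in> msupport (ellipse_state R r)"
  unfolding ellipse_state_eq_distr[OF \<open>R + r \<noteq> 0\<close>]
proof (rule msupport_distr[OF ell_curve_measurable _ \<open>0 < \<delta>\<close>])
  show "isCont (ell_curve R r) \<psi>"
    using continuous_on_ell_curve by (simp add: continuous_on_eq_continuous_at)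
  fix \<delta>' assume "0 < \<delta>'" "\<delta>' \<le> \<delta>"
  then show "emeasure (ellipse_parameter_measure R r) {\<psi><..<\<psi> + \<delta>'} > 0"
    unfolding ellipse_parameter_measure_def
    using assms ellipse_perimeter_pos[OF \<open>R + r \<noteq> 0\<close>]
    by (intro emeasure_density_restrict_interval_pos continuous_intros continuous_on_w2
        divide_pos_pos w2_pos) auto
qed

lemma bounded_linear_Kfield_ellipse_state:
  fixes l :: "real \<times> real \<Rightarrow> real"
  assumes F: "continuous_on UNIV (Fforce fA fR chi)" and "R + r \<noteq> 0" and l: "bounded_linear l"
  shows "l (Kfield fA fR chi (ellipse_state R r) x)
    = integral {0..2*pi} (\<lambda>\<phi>. w2 \<phi> R r * l (Fforce fA fR chi (x - ell_curve R r \<phi>))) / ellipse_perimeter R r"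
proof -
  have "ellipse_perimeter R r \<noteq> 0"
    using ellipse_perimeter_pos[OF \<open>R + r \<noteq> 0\<close>] by simp
  then have "continuous_on UNIV (\<lambda>\<phi>. (w2 \<phi> R r / ellipse_perimeter R r) *\<^sub>R
      Fforce fA fR chi (x - ell_curve R r \<phi>))"
    by (intro continuous_intros continuous_on_w2 continuous_on_compose2[OF F] continuous_on_ell_curve) auto
  then have "l (Kfield fA fR chi (ellipse_state R r) x)
      = integral {0..2*pi} (\<lambda>\<phi>. l ((w2 \<phi> R r / ellipse_perimeter R r) *\<^sub>R
          Fforce fA fR chi (x - ell_curve R r \<phi>)))"
    unfolding Kfield_ellipse_state[OF F \<open>R + r \<noteq> 0\<close>]
    by (subst integral_linear[OF _ l, symmetric, unfolded o_def])
       (auto intro: integrable_continuous_interval continuous_on_subset)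
  then show ?thesis
    by (simp add: linear_scale[OF bounded_linear.linear[OF l]])
qed

lemma fst_Fforce_from_vertex:
  "fst (Fforce fA fR chi (ell_curve R r 0 - ell_curve R r \<phi>))
     = (fA (w1 \<phi> R r) + fR (w1 \<phi> R r)) * (R * (1 - cos \<phi>))"
proof -
  have "norm (ell_curve R r 0 - ell_curve R r \<phi>) = w1 \<phi> R r"
    by (simp add: ell_curve_def w1_def norm_Pair power_mult_distrib power2_eq_square algebra_simps)
  then show ?thesis
    by (simp add: Fforce_def Tmat_def ell_curve_def algebra_simps)
qed

lemma snd_Fforce_from_covertex:
  "snd (Fforce fA fR chi (ell_curve R r (pi/2) - ell_curve R r \<phi>))
     = (chi * fA (w3 \<phi> R r) + fR (w3 \<phi> R r)) * ((R + r) * (1 - sin \<phi>))"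
proof -
  have "norm (ell_curve R r (pi/2) - ell_curve R r \<phi>) = w3 \<phi> R r"
    by (simp add: ell_curve_def w3_def norm_Pair power_mult_distrib power2_eq_square algebra_simps)
  then show ?thesis
    by (simp add: Fforce_def Tmat_def ell_curve_def algebra_simps)
qed

lemma fst_Kfield_ellipse_vertex:
  assumes fA: "continuous_on {0..} fA" and fR: "continuous_on {0..} fR" and "R + r \<noteq> 0"
  shows "fst (Kfield fA fR chi (ellipse_state R r) (ell_curve R r 0))
     = 2 / ellipse_perimeter R r *
       integral {0..pi} (\<lambda>\<phi>. (fA (w1 \<phi> R r) + fR (w1 \<phi> R r)) * R * (1 - cos \<phi>) * w2 \<phi> R r)"
    (is "_ = _ * integral _ ?G")
proof -
  have cont_w1: "continuous_on UNIV (\<lambda>\<phi>. w1 \<phi> R r)"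
    unfolding w1_def by (intro continuous_intros)
  have cont: "continuous_on UNIV ?G"
    by (intro continuous_intros continuous_on_w2 continuous_on_compose_nonneg[OF fA cont_w1]
        continuous_on_compose_nonneg[OF fR cont_w1]) (simp_all add: w1_def)
  have "fst (Kfield fA fR chi (ellipse_state R r) (ell_curve R r 0))
      = integral {0..2*pi} ?G / ellipse_perimeter R r"
    by (simp add: bounded_linear_Kfield_ellipse_state[OF continuous_on_Fforce[OF fA fR] \<open>R + r \<noteq> 0\<close>
        bounded_linear_fst] fst_Fforce_from_vertex mult_ac)
  also have "integral {0..2*pi} ?G = 2 * integral {0..pi} ?G"
    using integral_reflection_symmetric[OF cont, of pi] by (simp add: w1_def w2_def)
  finally show ?thesis by simp
qed

lemma snd_Kfield_ellipse_covertex: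
  assumes fA: "continuous_on {0..} fA" and fR: "continuous_on {0..} fR" and "R + r \<noteq> 0"
  shows "snd (Kfield fA fR chi (ellipse_state R r) (ell_curve R r (pi/2)))
     = 2 / ellipse_perimeter R r *
       integral {pi/2..3*pi/2}
         (\<lambda>\<phi>. (chi * fA (w3 \<phi> R r) + fR (w3 \<phi> R r)) * (R + r) * (1 - sin \<phi>) * w2 \<phi> R r)"
    (is "_ = _ * integral _ ?G")
proof -
  have cont_w3: "continuous_on UNIV (\<lambda>\<phi>. w3 \<phi> R r)"
    unfolding w3_def by (intro continuous_intros)
  have cont: "continuous_on UNIV ?G"
    by (intro continuous_intros continuous_on_w2 continuous_on_compose_nonneg[OF fA cont_w3]
        continuous_on_compose_nonneg[OF fR cont_w3]) (simp_all add: w3_def)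
  have "snd (Kfield fA fR chi (ellipse_state R r) (ell_curve R r (pi/2)))
      = integral {0..2*pi} ?G / ellipse_perimeter R r"
    by (simp add: bounded_linear_Kfield_ellipse_state[OF continuous_on_Fforce[OF fA fR] \<open>R + r \<noteq> 0\<close>
        bounded_linear_snd] snd_Fforce_from_covertex mult_ac)
  also have "integral {0..2*pi} ?G = 2 * integral {pi/2..3*pi/2} ?G"
    using integral_periodic_reflection_symmetric[OF cont, of pi] by (simp add: w3_def w2_def)
  finally show ?thesis by simp
qed

theorem corollary3p7:
  fixes fA fR :: "real \<Rightarrow> real" and chi da de R r :: real
  assumes chi: "0 \<le> chi" "chi \<le> 1"
    and smoothA: "smooth_on {0..} fA" and smoothR: "smooth_on {0..} fR"
    and intA: "set_integrable lborel {0..} fA" and intR: "set_integrable lborel {0..} fR"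
    and signR: "\<forall>\<rho>\<ge>0. fR \<rho> \<ge> 0" and signA: "\<forall>\<rho>\<ge>0. fA \<rho> \<le> 0"
    and da: "da > 0"
    and da_neg: "\<forall>\<rho>>da. fA \<rho> + fR \<rho> \<le> 0"
    and da_pos: "\<forall>\<rho>. 0 \<le> \<rho> \<and> \<rho> < da \<longrightarrow> fA \<rho> + fR \<rho> > 0"
    and C1: "\<exists>F'. (\<forall>d. (Fforce fA fR chi has_derivative F' d) (at d))
                 \<and> (\<forall>v. continuous_on UNIV (\<lambda>d. F' d v))
                 \<and> (\<exists>B. \<forall>d v. norm (F' d v) \<le> B * norm v)"
    and de: "de > da"
    and decr: "\<forall>c\<in>{0..1}. strict_antimono_on {0..de} (\<lambda>\<rho>. c * fA \<rho> + fR \<rho>)"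
    and Rr: "R \<ge> 0" "r \<ge> 0"
    and eq: "equilibrium_state fA fR chi (ellipse_state R r)"
  shows "integral {0..pi} (\<lambda>\<phi>. (fA (w1 \<phi> R r) + fR (w1 \<phi> R r)) * R * (1 - cos \<phi>) * w2 \<phi> R r) = 0
       \<and> integral {pi/2..3*pi/2}
           (\<lambda>\<phi>. (\<lambda>\<rho>. chi * fA \<rho> + fR \<rho>) (w3 \<phi> R r) * (R + r) * (1 - sin \<phi>) * w2 \<phi> R r) = 0"
proof (cases "R + r = 0")
  case True
  moreover have "R = 0" using True Rr by simp
  ultimately show ?thesis by simp
next
  case False
  have fA: "continuous_on {0..} fA" and fR: "continuous_on {0..} fR"
    using smoothA smoothR by (simp_all add: smooth_on_imp_continuous_on)
  let ?K = "Kfield fA fR chi (ellipse_state R r)"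
  have vanish: "?K (ell_curve R r \<psi>) = 0" if "ell_curve R r \<psi> \<in> msupport (ellipse_state R r)" for \<psi>
    using eq that unfolding equilibrium_state_def
    by (intro continuous_AE_zero_on_msupport
        continuous_on_Kfield_ellipse_state[OF continuous_on_Fforce[OF fA fR] False]) auto
  have "?K (ell_curve R r 0) = 0"
    by (intro vanish ell_curve_in_msupport[OF False, of "pi/2"]) (auto dest: cos_gt_zero)
  moreover have "?K (ell_curve R r (pi/2)) = 0"
  proof (intro vanish ell_curve_in_msupport[OF False, of "pi/2"])
    show "cos \<phi> \<noteq> 0" if "pi/2 < \<phi>" "\<phi> < pi/2 + pi/2" for \<phi>
      using cos_gt_zero[of "pi - \<phi>"] that by (simp add: cos_pi_minus)
  qed auto
  ultimately show ?thesis
    using fst_Kfield_ellipse_vertex[OF fA fR False, where chi=chi]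
      snd_Kfield_ellipse_covertex[OF fA fR False, where chi=chi]
      ellipse_perimeter_pos[OF False] by simp
qed

end
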